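(* Let $f:\mathbb{R}^m\to\mathbb{R}^m$, $y_0\in\mathbb{R}^m$, $T>0$, $h>0$, and let $(y_n)$ be defined by $y_{n+1}=y_n+hf(y_n)$ for $0\le n<\lfloor T/h\rfloor$. For $R>0$ let $\Omega=\{y:\|y-y_0\|<R\}$ and suppose $f$ is Lipschitz on $\Omega$ with constant $\mathcal{L}_f:=\sup_{y_1\ne y_2,\ y_1,y_2\in\Omega}\frac{\|f(y_2)-f(y_1)\|}{\|y_2-y_1\|}\in(0,\infty)$. If \[ R>\frac{1}{\mathcal{L}_f}\Big((1+\mathcal{L}_fh)^{\lfloor T/h\rfloor}-1\Big)\|f(y_0)\|, \] then $\|y_n-y_0\|\le R$ for all $n=0,1,\dots,\lfloor T/h\rfloor$.
   Context: $\|\cdot\|$ is the Euclidean norm and $\lfloor x\rfloor$ the largest integer not exceeding $x$. *)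

theory Defs
  imports "HOL-Analysis.Analysis"
begin

definition lip_quotients :: "('a::real_normed_vector \<Rightarrow> 'b::real_normed_vector) \<Rightarrow> 'a set \<Rightarrow> real set" where
  "lip_quotients f S = {norm (f y2 - f y1) / norm (y2 - y1) | y1 y2. y1 \<in> S \<and> y2 \<in> S \<and> y1 \<noteq> y2}"

definition lip_const :: "('a::real_normed_vector \<Rightarrow> 'b::real_normed_vector) \<Rightarrow> 'a set \<Rightarrow> real" where
  "lip_const f S = Sup (lip_quotients f S)"

end

theory Submission
  imports Defs
begin

text \<open>Only the Lipschitz bound relative to the centre is needed:
  \<open>\<parallel>f y\<^sub>n\<parallel> \<le> \<parallel>f y\<^sub>0\<parallel> + L \<parallel>y\<^sub>n - y\<^sub>0\<parallel>\<close> as long as \<open>y\<^sub>n\<close> lies in the ball,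
  so the errors \<open>e\<^sub>n = \<parallel>y\<^sub>n - y\<^sub>0\<parallel>\<close> satisfy \<open>e\<^sub>n\<^sub>+\<^sub>1 \<le> (1 + L h) e\<^sub>n + h \<parallel>f y\<^sub>0\<parallel>\<close>.
  This discrete Gronwall recursion gives \<open>e\<^sub>n \<le> ((1 + L h)\<^sup>n - 1) / L \<parallel>f y\<^sub>0\<parallel>\<close>,
  which increases in \<open>n\<close> and is below \<open>R\<close> up to the final step, so by induction
  each iterate stays in the open ball where the Lipschitz bound is available.\<close>

lemma lip_const_bound:
  assumes "bdd_above (lip_quotients f S)" and "x \<in> S" and "z \<in> S"
  shows "norm (f x - f z) \<le> lip_const f S * norm (x - z)"
proof (cases "x = z")
  case False
  then have "norm (f x - f z) / norm (x - z) \<in> lip_quotients f S"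
    unfolding lip_quotients_def using assms(2,3) by blast
  then have "norm (f x - f z) / norm (x - z) \<le> lip_const f S"
    unfolding lip_const_def using assms(1) by (rule cSup_upper)
  with False show ?thesis by (simp add: divide_le_eq mult.commute)
qed simp

lemma norm_euler_step_le:
  fixes f :: "'a::real_normed_vector \<Rightarrow> 'a"
  assumes "norm (f x - f x0) \<le> L * norm (x - x0)" and "h \<ge> 0"
  shows "norm (x + h *\<^sub>R f x - x0) \<le> (1 + L * h) * norm (x - x0) + h * norm (f x0)"
proof -
  have "norm (f x) \<le> norm (f x0) + L * norm (x - x0)"
    using assms(1) norm_triangle_ineq[of "f x - f x0" "f x0"] by simp
  then have "h * norm (f x) \<le> h * (norm (f x0) + L * norm (x - x0))"
    using assms(2) by (rule mult_left_mono)
  moreover have "norm (x + h *\<^sub>R f x - x0) \<le> norm (x - x0) + h * norm (f x)"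
    using norm_triangle_ineq[of "x - x0" "h *\<^sub>R f x"] assms(2) by (simp add: algebra_simps)
  ultimately show ?thesis by (simp add: algebra_simps)
qed

definition euler_growth_bound :: "real \<Rightarrow> real \<Rightarrow> real \<Rightarrow> nat \<Rightarrow> real" where
  "euler_growth_bound L h F n = ((1 + L * h) ^ n - 1) / L * F"

lemma euler_growth_bound_0 [simp]: "euler_growth_bound L h F 0 = 0"
  by (simp add: euler_growth_bound_def)

lemma euler_growth_bound_Suc:
  assumes "L \<noteq> 0"
  shows "euler_growth_bound L h F (Suc n) = (1 + L * h) * euler_growth_bound L h F n + h * F"
  using assms by (simp add: euler_growth_bound_def field_simps)

lemma euler_growth_bound_mono:
  assumes "L \<ge> 0" and "h \<ge> 0" and "F \<ge> 0" and "m \<le> n"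
  shows "euler_growth_bound L h F m \<le> euler_growth_bound L h F n"
proof -
  have "(1 + L * h) ^ m \<le> (1 + L * h) ^ n"
    using assms by (intro power_increasing) auto
  then show ?thesis
    unfolding euler_growth_bound_def using assms by (intro mult_right_mono divide_right_mono) auto
qed

lemma euler_iterates_norm_le:
  fixes f :: "'a::real_normed_vector \<Rightarrow> 'a" and y :: "nat \<Rightarrow> 'a"
  assumes lip: "\<And>x. x \<in> ball (y 0) R \<Longrightarrow> norm (f x - f (y 0)) \<le> L * norm (x - y 0)"
    and step: "\<And>n. n < N \<Longrightarrow> y (Suc n) = y n + h *\<^sub>R f (y n)"
    and "L > 0" and "h \<ge> 0"
    and R: "euler_growth_bound L h (norm (f (y 0))) N < R"
  shows "n \<le> N \<Longrightarrow> norm (y n - y 0) \<le> euler_growth_bound L h (norm (f (y 0))) n"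
proof (induction n)
  case (Suc n)
  let ?B = "euler_growth_bound L h (norm (f (y 0)))"
  have IH: "norm (y n - y 0) \<le> ?B n"
    using Suc by simp
  moreover have "?B n \<le> ?B N"
    using Suc.prems \<open>L > 0\<close> \<open>h \<ge> 0\<close> by (intro euler_growth_bound_mono) auto
  ultimately have "y n \<in> ball (y 0) R"
    using R by (simp add: dist_norm norm_minus_commute)
  then have "norm (y (Suc n) - y 0) \<le> (1 + L * h) * norm (y n - y 0) + h * norm (f (y 0))"
    using step[of n] Suc.prems \<open>h \<ge> 0\<close> by (simp add: lip norm_euler_step_le)
  also have "\<dots> \<le> (1 + L * h) * ?B n + h * norm (f (y 0))"
    using IH \<open>L > 0\<close> \<open>h \<ge> 0\<close> by (simp add: mult_left_mono)
  also have "\<dots> = ?B (Suc n)"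
    using \<open>L > 0\<close> by (simp add: euler_growth_bound_Suc)
  finally show ?case .
qed simp

theorem lemma3p8:
  fixes f :: "real ^ 'm \<Rightarrow> real ^ 'm" and y :: "nat \<Rightarrow> real ^ 'm"
    and y0 :: "real ^ 'm" and T h R :: real
  assumes "T > 0" and "h > 0"
    and "y 0 = y0"
    and "\<And>n. n < nat \<lfloor>T / h\<rfloor> \<Longrightarrow> y (Suc n) = y n + h *\<^sub>R f (y n)"
    and "R > 0"
    and "bdd_above (lip_quotients f (ball y0 R))"
    and "lip_const f (ball y0 R) > 0"
    and "R > (1 / lip_const f (ball y0 R)) *
              ((1 + lip_const f (ball y0 R) * h) ^ nat \<lfloor>T / h\<rfloor> - 1) * norm (f y0)"
  shows "\<forall>n \<le> nat \<lfloor>T / h\<rfloor>. norm (y n - y0) \<le> R"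
proof (intro allI impI)
  fix n assume n: "n \<le> nat \<lfloor>T / h\<rfloor>"
  let ?L = "lip_const f (ball y0 R)" and ?N = "nat \<lfloor>T / h\<rfloor>"
  let ?B = "euler_growth_bound ?L h (norm (f y0))"
  have R: "?B ?N < R"
    using assms(8) by (simp add: euler_growth_bound_def)
  have "norm (y n - y0) \<le> ?B n"
    using euler_iterates_norm_le[where f = f and y = y and R = R and L = ?L and N = ?N and h = h]
      lip_const_bound[OF assms(6)] assms(2-4,7) R n
    by (simp add: assms(5))
  also have "\<dots> \<le> ?B ?N"
    using n assms(2,7) by (intro euler_growth_bound_mono) auto
  finally show "norm (y n - y0) \<le> R"
    using R by simp
qed

end
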